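(* Let $G=(V,E)$ be a finite directed graph with $k$ players; player $i$ has a source–sink pair $(s_i,t_i)$ and flow amount $r_i>0$, and routes all of $r_i$ along a single path $P_i$ in the set $\Pi_i$ of $s_i$–$t_i$ paths. For a feasible flow $f$ (a choice of $P_i\in\Pi_i$ for each $i$), let $f_e=\sum_{i:e\in P_i} r_i$. Each edge $e$ has an affine congestion function $c_e(x)=a_e x+b_e$ with $c_e:\mathbb{R}^+\to\mathbb{R}^+$, and a unit-price function $u_e:\mathbb{R}^+\to\mathbb{R}^+$; the cost to player $i$ of path $P$ is $t^i_P(f)=\sum_{e\in P}\bigl(c_e(f_e)+u_e(r_i)\bigr)$. The social cost of $f$ is $$SC(f)=\sum_{e\in E} c_e(f_e)f_e+\sum_{i=1}^k\sum_{e\in P_i}u_e(r_i)\,r_i .$$ A flow $f$ is an equilibrium flow if no player $i$ can obtain $t^i_{\tilde P}(\tilde f)<t^i_{P_i}(f)$ by switching to another path $\tilde P\in\Pi_i$, where $\tilde f$ is $f$ with player $i$'s path replaced by $\tilde P$. Let $f^*$ be a feasible flow minimizing $SC$. Then for every equilibrium flow $f$, $$\frac{SC(f)}{SC(f^* )}\le\frac{3+\sqrt5}{2},$$ i.e. the price of anarchy is at most $\frac{3+\sqrt5}{2}\approx 2.618$.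
   Context: The price of anarchy is the ratio of the social cost of the worst equilibrium flow to the social cost of an optimal (social-cost-minimizing) feasible flow. *)

theory Defs
  imports Complex_Main
begin

fun walk :: "('e \<Rightarrow> 'v) \<Rightarrow> ('e \<Rightarrow> 'v) \<Rightarrow> 'v \<Rightarrow> 'v \<Rightarrow> 'e list \<Rightarrow> bool" where
  "walk tail head s t [] = (s = t)"
| "walk tail head s t (e # es) = (tail e = s \<and> walk tail head (head e) t es)"

definition st_path :: "'e set \<Rightarrow> ('e \<Rightarrow> 'v) \<Rightarrow> ('e \<Rightarrow> 'v) \<Rightarrow> 'v \<Rightarrow> 'v \<Rightarrow> 'e list \<Rightarrow> bool" where
  "st_path E tail head s t P \<longleftrightarrow> set P \<subseteq> E \<and> walk tail head s t P \<and> distinct (s # map head P)"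

definition feasible :: "'e set \<Rightarrow> ('e \<Rightarrow> 'v) \<Rightarrow> ('e \<Rightarrow> 'v) \<Rightarrow> nat \<Rightarrow> (nat \<Rightarrow> 'v) \<Rightarrow> (nat \<Rightarrow> 'v)
    \<Rightarrow> (nat \<Rightarrow> 'e list) \<Rightarrow> bool" where
  "feasible E tail head k s t P \<longleftrightarrow> (\<forall>i<k. st_path E tail head (s i) (t i) (P i))"

definition load :: "nat \<Rightarrow> (nat \<Rightarrow> real) \<Rightarrow> (nat \<Rightarrow> 'e list) \<Rightarrow> 'e \<Rightarrow> real" where
  "load k r P e = (\<Sum>i\<in>{i. i < k \<and> e \<in> set (P i)}. r i)"

definition player_cost :: "nat \<Rightarrow> (nat \<Rightarrow> real) \<Rightarrow> ('e \<Rightarrow> real) \<Rightarrow> ('e \<Rightarrow> real)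
    \<Rightarrow> ('e \<Rightarrow> real \<Rightarrow> real) \<Rightarrow> nat \<Rightarrow> 'e list \<Rightarrow> (nat \<Rightarrow> 'e list) \<Rightarrow> real" where
  "player_cost k r a b u i Q P =
     (\<Sum>e\<in>set Q. (a e * load k r P e + b e) + u e (r i))"

definition social_cost :: "'e set \<Rightarrow> nat \<Rightarrow> (nat \<Rightarrow> real) \<Rightarrow> ('e \<Rightarrow> real) \<Rightarrow> ('e \<Rightarrow> real)
    \<Rightarrow> ('e \<Rightarrow> real \<Rightarrow> real) \<Rightarrow> (nat \<Rightarrow> 'e list) \<Rightarrow> real" where
  "social_cost E k r a b u P =
     (\<Sum>e\<in>E. (a e * load k r P e + b e) * load k r P e)
     + (\<Sum>i<k. \<Sum>e\<in>set (P i). u e (r i) * r i)"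

definition equilibrium :: "'e set \<Rightarrow> ('e \<Rightarrow> 'v) \<Rightarrow> ('e \<Rightarrow> 'v) \<Rightarrow> nat \<Rightarrow> (nat \<Rightarrow> 'v) \<Rightarrow> (nat \<Rightarrow> 'v)
    \<Rightarrow> (nat \<Rightarrow> real) \<Rightarrow> ('e \<Rightarrow> real) \<Rightarrow> ('e \<Rightarrow> real) \<Rightarrow> ('e \<Rightarrow> real \<Rightarrow> real)
    \<Rightarrow> (nat \<Rightarrow> 'e list) \<Rightarrow> bool" where
  "equilibrium E tail head k s t r a b u P \<longleftrightarrow>
     feasible E tail head k s t P \<and>
     (\<forall>i<k. \<forall>Q. st_path E tail head (s i) (t i) Q \<longrightarrow>
        \<not> (player_cost k r a b u i Q (P(i := Q)) < player_cost k r a b u i (P i) P))"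

end

theory Submission
  imports Defs
begin

text \<open>Let \<open>f\<close> be the equilibrium loads and \<open>g\<close> those of any feasible flow.
Each player \<open>i\<close> does not gain by moving to its path in the other flow, where it meets
load at most \<open>f\<^sub>e + r\<^sub>i\<close>. Weighting these inequalities by \<open>r\<^sub>i\<close> and summing gives
\<open>SC(f) \<le> \<Sum>\<^sub>e (a\<^sub>e f\<^sub>e + b\<^sub>e) g\<^sub>e + a\<^sub>e g\<^sub>e\<^sup>2 + (price part of SC(g))\<close>, using
\<open>\<Sum> r\<^sub>i\<^sup>2 \<le> g\<^sub>e\<^sup>2\<close>. With \<open>\<lambda> = (\<surd>5 - 1)/4\<close> and \<open>\<mu> = (5 + \<surd>5)/4\<close> the pointwise bound
\<open>a f g + a g\<^sup>2 + b g \<le> \<lambda> a f\<^sup>2 + \<mu> (a g\<^sup>2 + b g)\<close> then yields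
\<open>SC(f) \<le> \<lambda> SC(f) + \<mu> SC(g)\<close>, i.e. \<open>SC(f) \<le> \<mu>/(1 - \<lambda>) SC(g) = (3 + \<surd>5)/2 SC(g)\<close>.\<close>

lemma affine_nonneg_on_nonneg_imp:
  fixes a b :: real
  assumes "\<forall>x\<ge>0. a * x + b \<ge> 0"
  shows "a \<ge> 0" and "b \<ge> 0"
proof -
  show "b \<ge> 0" using assms by force
  show "a \<ge> 0"
  proof (rule ccontr)
    assume "\<not> a \<ge> 0"
    define x where "x = (\<bar>b\<bar> + 1) / - a"
    have "x \<ge> 0" and "a * x = - (\<bar>b\<bar> + 1)"
      using \<open>\<not> a \<ge> 0\<close> unfolding x_def by (simp_all add: divide_nonneg_neg)
    moreover have "a * x + b \<ge> 0" using assms \<open>x \<ge> 0\<close> by blast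
    ultimately show False by linarith
  qed
qed

lemma sum_squares_le_square_sum:
  fixes w :: "'a \<Rightarrow> real"
  assumes "finite S" "\<And>i. i \<in> S \<Longrightarrow> w i \<ge> 0"
  shows "(\<Sum>i\<in>S. w i * w i) \<le> sum w S * sum w S"
proof -
  have "(\<Sum>i\<in>S. w i * w i) \<le> (\<Sum>i\<in>S. w i * sum w S)"
    using assms by (intro sum_mono mult_left_mono member_le_sum) auto
  then show ?thesis by (simp add: sum_distrib_right)
qed

lemma sum_paths_eq_sum_load:
  fixes w :: "nat \<Rightarrow> real" and h :: "'e \<Rightarrow> real"
  assumes "finite E" "\<forall>i<k. set (P i) \<subseteq> E"
  shows "(\<Sum>i<k. \<Sum>e\<in>set (P i). w i * h e) = (\<Sum>e\<in>E. h e * load k w P e)"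
proof -
  have "(\<Sum>i<k. \<Sum>e\<in>set (P i). w i * h e) = (\<Sum>i<k. \<Sum>e\<in>E. if e \<in> set (P i) then w i * h e else 0)"
  proof (rule sum.cong[OF refl])
    fix i assume "i \<in> {..<k}"
    then have "set (P i) = {e\<in>E. e \<in> set (P i)}" using assms(2) by auto
    then show "(\<Sum>e\<in>set (P i). w i * h e) = (\<Sum>e\<in>E. if e \<in> set (P i) then w i * h e else 0)"
      using sum.inter_filter[OF assms(1), of "\<lambda>e. w i * h e" "\<lambda>e. e \<in> set (P i)"] by simp
  qed
  also have "\<dots> = (\<Sum>e\<in>E. \<Sum>i<k. if e \<in> set (P i) then w i * h e else 0)"
    by (rule sum.swap)
  also have "\<dots> = (\<Sum>e\<in>E. h e * load k w P e)"
  proof (rule sum.cong[OF refl])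
    fix e
    have "{i. i < k \<and> e \<in> set (P i)} = {i\<in>{..<k}. e \<in> set (P i)}" by auto
    then show "(\<Sum>i<k. if e \<in> set (P i) then w i * h e else 0) = h e * load k w P e"
      using sum.inter_filter[of "{..<k}" "\<lambda>i. w i * h e" "\<lambda>i. e \<in> set (P i)"]
      by (simp add: load_def sum_distrib_left mult.commute)
  qed
  finally show ?thesis .
qed

lemma feasible_imp_paths_subset:
  "feasible E tail head k s t P \<Longrightarrow> \<forall>i<k. set (P i) \<subseteq> E"
  unfolding feasible_def st_path_def by blast

lemma load_nonneg:
  assumes "\<forall>i<k. w i \<ge> 0"
  shows "load k w P e \<ge> 0"
  unfolding load_def using assms by (intro sum_nonneg) auto

lemma load_fun_upd_le:
  assumes "i < k" "\<forall>j<k. r j \<ge> 0"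
  shows "load k r (P(i := Q)) e \<le> load k r P e + r i"
proof -
  let ?B = "{j. j < k \<and> e \<in> set (P j)}"
  have "load k r (P(i := Q)) e \<le> sum r (insert i ?B)"
    unfolding load_def using assms by (intro sum_mono2) auto
  also have "\<dots> \<le> r i + sum r ?B"
    using assms by (cases "i \<in> ?B") (auto simp: sum.insert_if)
  finally show ?thesis unfolding load_def by simp
qed

lemma load_squares_le_square_load:
  assumes "\<forall>i<k. r i \<ge> 0"
  shows "load k (\<lambda>i. r i * r i) P e \<le> load k r P e * load k r P e"
  unfolding load_def using assms by (intro sum_squares_le_square_sum) auto

text \<open>The two roots of \<open>(\<surd>5 - 1) x\<^sup>2 - 4 x + (\<surd>5 + 1)\<close> coincide, so this quadratic form in
\<open>f, g\<close> is a perfect square.\<close>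

lemma affine_smoothness:
  fixes a b f g :: real
  assumes "a \<ge> 0" "b \<ge> 0" "f \<ge> 0" "g \<ge> 0"
  shows "a*f*g + a*g*g + b*g \<le> (sqrt 5 - 1)/4 * (a*f*f) + (5 + sqrt 5)/4 * (a*g*g + b*g)"
proof -
  define q where "q = sqrt 5"
  have q2: "q * q = 5" and q1: "q \<ge> 1" unfolding q_def by (auto simp: real_le_rsqrt)
  have "(q-1) * (2*f - (q+1)*g)\<^sup>2 = 4*(q-1)*f*f - 4*(q*q-1)*f*g + (q*q-1)*(q+1)*g*g"
    by (simp add: power2_eq_square algebra_simps)
  also have "\<dots> = 4 * ((q-1)*f*f - 4*f*g + (q+1)*g*g)"
    by (simp add: q2 algebra_simps)
  finally have "4 * ((q-1)*f*f - 4*f*g + (q+1)*g*g) = (q-1) * (2*f - (q+1)*g)\<^sup>2" ..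
  also have "\<dots> \<ge> 0" using q1 by simp
  finally have "0 \<le> a * ((q-1)*f*f - 4*f*g + (q+1)*g*g)" using assms by simp
  moreover have "0 \<le> (1+q) * b * g" using assms q1 by simp
  ultimately have "4 * (a*f*g + a*g*g + b*g) \<le> (q-1) * (a*f*f) + (5+q) * (a*g*g + b*g)"
    by (simp add: algebra_simps)
  then show ?thesis unfolding q_def[symmetric] by simp
qed

lemma le_lambda_mu_imp_le:
  fixes x y lam mu :: real
  assumes "x \<le> lam * x + mu * y" "lam < 1"
  shows "x \<le> mu / (1 - lam) * y"
  using assms by (simp add: field_simps)

locale affine_congestion_game =
  fixes E :: "'e set" and k :: nat and r :: "nat \<Rightarrow> real"
    and a b :: "'e \<Rightarrow> real" and u :: "'e \<Rightarrow> real \<Rightarrow> real"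
  assumes finite_E: "finite E"
    and demand_nonneg: "\<forall>i<k. r i \<ge> 0"
    and slope_nonneg: "\<And>e. e \<in> E \<Longrightarrow> a e \<ge> 0"
    and intercept_nonneg: "\<And>e. e \<in> E \<Longrightarrow> b e \<ge> 0"
    and price_nonneg: "\<And>e x. e \<in> E \<Longrightarrow> x \<ge> 0 \<Longrightarrow> u e x \<ge> 0"
begin

definition price_cost :: "(nat \<Rightarrow> 'e list) \<Rightarrow> real" where
  "price_cost P = (\<Sum>i<k. \<Sum>e\<in>set (P i). u e (r i) * r i)"

lemma price_cost_nonneg:
  assumes "\<forall>i<k. set (P i) \<subseteq> E"
  shows "price_cost P \<ge> 0"
  unfolding price_cost_def using assms demand_nonneg
  by (intro sum_nonneg mult_nonneg_nonneg price_nonneg) auto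

lemma social_cost_eq:
  "social_cost E k r a b u P = (\<Sum>e\<in>E. (a e * load k r P e + b e) * load k r P e) + price_cost P"
  unfolding social_cost_def price_cost_def ..

lemma equilibrium_player_ineq:
  assumes eq: "equilibrium E tail head k s t r a b u P"
    and Q: "st_path E tail head (s i) (t i) Q" and i: "i < k"
  shows "(\<Sum>e\<in>set (P i). a e * load k r P e + b e + u e (r i))
       \<le> (\<Sum>e\<in>set Q. a e * load k r P e + b e + a e * r i + u e (r i))"
proof -
  have "(\<Sum>e\<in>set (P i). a e * load k r P e + b e + u e (r i))
      \<le> player_cost k r a b u i Q (P(i := Q))"
    using eq Q i unfolding equilibrium_def player_cost_def by (simp add: not_less)
  also have "\<dots> \<le> (\<Sum>e\<in>set Q. a e * load k r P e + b e + a e * r i + u e (r i))"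
    unfolding player_cost_def
  proof (rule sum_mono)
    fix e assume "e \<in> set Q"
    then have "a e * load k r (P(i := Q)) e \<le> a e * (load k r P e + r i)"
      using Q slope_nonneg unfolding st_path_def
      by (intro mult_left_mono load_fun_upd_le[OF i demand_nonneg]) auto
    then show "a e * load k r (P(i := Q)) e + b e + u e (r i)
        \<le> a e * load k r P e + b e + a e * r i + u e (r i)" by (simp add: algebra_simps)
  qed
  finally show ?thesis .
qed

lemma equilibrium_variational_ineq:
  assumes eq: "equilibrium E tail head k s t r a b u P"
    and Q: "feasible E tail head k s t Q"
  shows "social_cost E k r a b u P
       \<le> (\<Sum>e\<in>E. (a e * load k r P e + b e) * load k r Q e + a e * load k r Q e * load k r Q e)
         + price_cost Q"
proof -
  let ?g = "load k r Q" and ?c = "\<lambda>e. a e * load k r P e + b e"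
  have subP: "\<forall>i<k. set (P i) \<subseteq> E" and subQ: "\<forall>i<k. set (Q i) \<subseteq> E"
    using eq Q feasible_imp_paths_subset unfolding equilibrium_def by blast+
  have "social_cost E k r a b u P = (\<Sum>i<k. r i * (\<Sum>e\<in>set (P i). ?c e + u e (r i)))"
    unfolding social_cost_eq price_cost_def sum_paths_eq_sum_load[OF finite_E subP, symmetric]
    by (simp add: sum_distrib_left sum.distrib algebra_simps)
  also have "\<dots> \<le> (\<Sum>i<k. r i * (\<Sum>e\<in>set (Q i). ?c e + a e * r i + u e (r i)))"
    using Q demand_nonneg unfolding feasible_def
    by (intro sum_mono mult_left_mono equilibrium_player_ineq[OF eq]) auto
  also have "\<dots> = (\<Sum>e\<in>E. ?c e * ?g e) + (\<Sum>e\<in>E. a e * load k (\<lambda>i. r i * r i) Q e) + price_cost Q"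
    unfolding price_cost_def sum_paths_eq_sum_load[OF finite_E subQ, symmetric]
    by (simp add: sum_distrib_left sum.distrib algebra_simps)
  also have "(\<Sum>e\<in>E. a e * load k (\<lambda>i. r i * r i) Q e) \<le> (\<Sum>e\<in>E. a e * ?g e * ?g e)"
    using slope_nonneg demand_nonneg
    by (intro sum_mono) (simp add: mult.assoc mult_left_mono load_squares_le_square_load)
  finally show ?thesis by (simp add: sum.distrib)
qed

lemma equilibrium_smoothness:
  assumes eq: "equilibrium E tail head k s t r a b u P"
    and Q: "feasible E tail head k s t Q"
  shows "social_cost E k r a b u P
       \<le> (sqrt 5 - 1)/4 * social_cost E k r a b u P + (5 + sqrt 5)/4 * social_cost E k r a b u Q"
proof -
  let ?f = "load k r P" and ?g = "load k r Q"
  define lam :: real where "lam = (sqrt 5 - 1)/4"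
  define mu :: real where "mu = (5 + sqrt 5)/4"
  have "lam \<ge> 0" "mu \<ge> 1" unfolding lam_def mu_def by (auto simp: real_le_rsqrt)
  have subP: "\<forall>i<k. set (P i) \<subseteq> E" and subQ: "\<forall>i<k. set (Q i) \<subseteq> E"
    using eq Q feasible_imp_paths_subset unfolding equilibrium_def by blast+
  have f_sq_le: "(\<Sum>e\<in>E. a e * ?f e * ?f e) \<le> social_cost E k r a b u P"
    unfolding social_cost_eq using intercept_nonneg demand_nonneg price_cost_nonneg[OF subP]
    by (intro add_increasing2 sum_mono) (auto simp: distrib_right load_nonneg)
  have SCQ: "social_cost E k r a b u Q = (\<Sum>e\<in>E. a e * ?g e * ?g e + b e * ?g e) + price_cost Q"
    unfolding social_cost_eq by (simp add: distrib_right)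
  have "social_cost E k r a b u P
      \<le> (\<Sum>e\<in>E. a e * ?f e * ?g e + a e * ?g e * ?g e + b e * ?g e) + price_cost Q"
    using equilibrium_variational_ineq[OF eq Q]
    by (smt (verit) sum.cong distrib_right)
  also have "\<dots> \<le> (\<Sum>e\<in>E. lam * (a e * ?f e * ?f e) + mu * (a e * ?g e * ?g e + b e * ?g e))
                  + mu * price_cost Q"
  proof (rule add_mono)
    show "price_cost Q \<le> mu * price_cost Q"
      using mult_right_mono[OF \<open>mu \<ge> 1\<close> price_cost_nonneg[OF subQ]] by simp
  qed (unfold lam_def mu_def,
       use slope_nonneg intercept_nonneg demand_nonneg in \<open>intro sum_mono affine_smoothness load_nonneg; auto\<close>)
  also have "\<dots> = lam * (\<Sum>e\<in>E. a e * ?f e * ?f e) + mu * social_cost E k r a b u Q"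
    unfolding SCQ by (simp add: sum.distrib sum_distrib_left distrib_left)
  also have "\<dots> \<le> lam * social_cost E k r a b u P + mu * social_cost E k r a b u Q"
    using mult_left_mono[OF f_sq_le \<open>lam \<ge> 0\<close>] by simp
  finally show ?thesis unfolding lam_def mu_def .
qed

end

lemma lambda_mu_ratio: "((5 + sqrt 5)/4) / (1 - (sqrt 5 - 1)/4) = (3 + sqrt 5) / (2::real)"
proof -
  have "sqrt 5 < (5::real)" by (rule real_less_lsqrt) auto
  moreover have "(5 + sqrt 5) * 2 = (3 + sqrt 5) * (5 - sqrt (5::real))" by (simp add: algebra_simps)
  ultimately show ?thesis by (simp add: frac_eq_eq diff_divide_distrib)
qed

theorem mainTheorem3:
  fixes V :: "'v set" and E :: "'e set" and tail head :: "'e \<Rightarrow> 'v"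
    and k :: nat and s t :: "nat \<Rightarrow> 'v" and r :: "nat \<Rightarrow> real"
    and a b :: "'e \<Rightarrow> real" and u :: "'e \<Rightarrow> real \<Rightarrow> real"
    and Pstar P :: "nat \<Rightarrow> 'e list"
  assumes "finite V" and "finite E"
    and "\<forall>e\<in>E. tail e \<in> V \<and> head e \<in> V"
    and "\<forall>i<k. s i \<in> V \<and> t i \<in> V"
    and "\<forall>i<k. r i > 0"
    and "\<forall>e\<in>E. \<forall>x\<ge>0. a e * x + b e \<ge> 0"
    and "\<forall>e\<in>E. \<forall>x\<ge>0. u e x \<ge> 0"
    and "feasible E tail head k s t Pstar"
    and "\<forall>Q. feasible E tail head k s t Q \<longrightarrow> social_cost E k r a b u Pstar \<le> social_cost E k r a b u Q"
    and "equilibrium E tail head k s t r a b u P"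
  shows "social_cost E k r a b u P \<le> (3 + sqrt 5) / 2 * social_cost E k r a b u Pstar"
proof -
  interpret affine_congestion_game E k r a b u
  proof
    show "finite E" by fact
    show "\<forall>i<k. r i \<ge> 0" using assms(5) by (simp add: less_imp_le)
    fix e assume "e \<in> E"
    then have "\<forall>x\<ge>0. a e * x + b e \<ge> 0" using assms(6) by blast
    then show "a e \<ge> 0" and "b e \<ge> 0" by (rule affine_nonneg_on_nonneg_imp)+
    show "\<And>x. x \<ge> 0 \<Longrightarrow> u e x \<ge> 0" using assms(7) \<open>e \<in> E\<close> by blast
  qed
  have "social_cost E k r a b u P
      \<le> ((5 + sqrt 5)/4) / (1 - (sqrt 5 - 1)/4) * social_cost E k r a b u Pstar"
    by (rule le_lambda_mu_imp_le[OF equilibrium_smoothness[OF assms(10,8)]])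
      (simp add: real_less_lsqrt)
  then show ?thesis by (simp only: lambda_mu_ratio)
qed

end
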